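(* Let $0<2\delta\le\kappa<\lambda\le1$, $0<\epsilon<1/2$, and let $n$ be a positive integer. Put \[ D_0=\frac{\lambda\log(n)^2}{\epsilon}\,2^{\sqrt{\lambda\log(n)\log\left(\frac{\lambda\log(n)^2}{\epsilon}\right)/3}},\qquad M_0=D_0^2\,n^{\lambda}\,2^{\sqrt{3\lambda\log(n)\log\left(\frac{\lambda\log(n)^2}{\epsilon}\right)}} \] (logarithms base $2$). Suppose $\mathcal{G}$ is an $(n,M,D,n^{\lambda},(1-\epsilon)D)$-bipartite expander with $D\le D_0$ and $M\le M_0$, and that a Hadamard matrix $\mathbf{H}_M$ of order $M$ is given. Let $\mathbf{Q}$ be the pooling matrix constructed from $\mathcal{G}$ and $\mathbf{H}_M$. Then for every $\bm{z}\in\{0,\pm1\}^n$ with $n^{\kappa}\le\lVert\bm{z}\rVert_0\le n^{\lambda}$ we have $\lVert\mathbf{Q}\bm{z}\rVert_\infty\ge\sqrt{1-2\epsilon}\,n^{\delta}$, and the number of rows (pooling complexity) of $\mathbf{Q}$ is \[ MD\ \le\ n^{\lambda}\left(\frac{\lambda\log(n)^2}{\epsilon}\right)^3 4^{\sqrt{3\lambda\log(n)\log\left(\frac{\lambda\log(n)^2}{\epsilon}\right)}}. \]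
   Context: A bipartite graph $\mathcal{G}=([N],[M],\mathsf{E})$ is left-$D$-regular if each left vertex has exactly $D$ neighbours; $\Gamma(S)$ is the set of neighbours of $S\subseteq[N]$. It is an $(N,M,D,K,A)$-bipartite expander if it is left-$D$-regular and $|\Gamma(S)|\ge A|S|$ for all $S\subseteq[N]$ with $|S|\le K$. The induced matrix $\mathbf{B}_{\mathcal{G}}\in\{0,1\}^{M\times N}$ has $(j,i)$-entry $1$ iff $(i,j)\in\mathsf{E}$. A Hadamard matrix of order $M$ is an $M\times M$ $\pm1$-matrix with $\mathbf{H}_M^{\intercal}\mathbf{H}_M=M\mathbf{I}$. Construction of $\mathbf{Q}$: write $\mathbf{B}_{\mathcal{G}}=\sum_{i=1}^D\mathbf{B}_i$ with each $\mathbf{B}_i\in\{0,1\}^{M\times N}$ having exactly one nonzero entry per column; set $\mathbf{D}_i=\mathbf{H}_M\mathbf{B}_i$ and stack $\mathbf{Q}=[\mathbf{D}_1;\dots;\mathbf{D}_D]$ vertically (an $MD\times N$ matrix). $\lVert\cdot\rVert_0$ counts nonzero entries; $\lVert\cdot\rVert_\infty$ is the max absolute entry. *)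

theory Defs
  imports Complex_Main
begin

text \<open>Bipartite graphs G = ([N],[M],E): left vertices 0..<N, right vertices 0..<M,
  edge set E of pairs (left, right).\<close>

definition nbhd :: "(nat \<times> nat) set \<Rightarrow> nat set \<Rightarrow> nat set" where
  "nbhd E S = {j. \<exists>i\<in>S. (i, j) \<in> E}"

definition left_regular :: "nat \<Rightarrow> nat \<Rightarrow> nat \<Rightarrow> (nat \<times> nat) set \<Rightarrow> bool" where
  "left_regular N M D E \<longleftrightarrow>
     E \<subseteq> {0..<N} \<times> {0..<M} \<and> (\<forall>i<N. card (nbhd E {i}) = D)"

definition bip_expander ::
  "nat \<Rightarrow> nat \<Rightarrow> nat \<Rightarrow> real \<Rightarrow> real \<Rightarrow> (nat \<times> nat) set \<Rightarrow> bool" where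
  "bip_expander N M D K A E \<longleftrightarrow> left_regular N M D E \<and>
     (\<forall>S. S \<subseteq> {0..<N} \<longrightarrow> real (card S) \<le> K \<longrightarrow>
          real (card (nbhd E S)) \<ge> A * real (card S))"

definition induced_matrix :: "(nat \<times> nat) set \<Rightarrow> nat \<Rightarrow> nat \<Rightarrow> real" where
  "induced_matrix E j i = (if (i, j) \<in> E then 1 else 0)"

definition hadamard :: "nat \<Rightarrow> (nat \<Rightarrow> nat \<Rightarrow> real) \<Rightarrow> bool" where
  "hadamard M H \<longleftrightarrow>
     (\<forall>a<M. \<forall>b<M. H a b = 1 \<or> H a b = -1) \<and>
     (\<forall>a<M. \<forall>b<M. (\<Sum>k<M. H k a * H k b) = (if a = b then real M else 0))"

text \<open>A decomposition B_G = sum_{i<D} B_i where each B_i is a 0/1 M x N matrix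
  with exactly one nonzero entry per column (indices i = 0..<D instead of 1..D).\<close>
definition valid_decomposition ::
  "nat \<Rightarrow> nat \<Rightarrow> nat \<Rightarrow> (nat \<times> nat) set \<Rightarrow> (nat \<Rightarrow> nat \<Rightarrow> nat \<Rightarrow> real) \<Rightarrow> bool" where
  "valid_decomposition N M D E Bs \<longleftrightarrow>
     (\<forall>i<D. (\<forall>r<M. \<forall>c<N. Bs i r c = 0 \<or> Bs i r c = 1) \<and>
            (\<forall>c<N. card {r\<in>{0..<M}. Bs i r c \<noteq> 0} = 1)) \<and>
     (\<forall>r<M. \<forall>c<N. (\<Sum>i<D. Bs i r c) = induced_matrix E r c)"

text \<open>The pooling matrix Q = [H B_0; ...; H B_{D-1}] (an MD x N matrix):
  row p corresponds to block p div M and row p mod M within the block.\<close>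
definition pool_matrix ::
  "nat \<Rightarrow> (nat \<Rightarrow> nat \<Rightarrow> real) \<Rightarrow> (nat \<Rightarrow> nat \<Rightarrow> nat \<Rightarrow> real) \<Rightarrow> nat \<Rightarrow> nat \<Rightarrow> real" where
  "pool_matrix M H Bs p c = (\<Sum>k<M. H (p mod M) k * Bs (p div M) k c)"

definition mat_vec :: "nat \<Rightarrow> (nat \<Rightarrow> nat \<Rightarrow> real) \<Rightarrow> (nat \<Rightarrow> real) \<Rightarrow> nat \<Rightarrow> real" where
  "mat_vec N A z p = (\<Sum>c<N. A p c * z c)"

definition l0_norm :: "nat \<Rightarrow> (nat \<Rightarrow> real) \<Rightarrow> nat" where
  "l0_norm N z = card {c\<in>{0..<N}. z c \<noteq> 0}"

definition linf_norm :: "nat \<Rightarrow> (nat \<Rightarrow> real) \<Rightarrow> real" where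
  "linf_norm m v = (if m = 0 then 0 else Max ((\<lambda>p. \<bar>v p\<bar>) ` {0..<m}))"

end

theory Submission imports Defs begin

text \<open>Let S be the support of the ternary vector z. Expansion forces at least
  (1 - 2 eps) D |S| right vertices to have exactly one neighbour in S, and at each such
  vertex r the vector ((B_i z)_r)_{i<D} is a signed unit vector. Hence the blocks B_i z carry
  total squared norm at least (1 - 2 eps) D |S|, and some single block carries
  (1 - 2 eps) |S|. As H^T H = M I, the rows of H cannot all be shorter than that block in
  absolute inner product, so some entry of Q z is at least sqrt ((1 - 2 eps) |S|), which is at
  least sqrt (1 - 2 eps) n^delta because |S| \<ge> n^kappa \<ge> n^(2 delta).\<close>

lemma exists_ge_average:
  fixes f :: "'a \<Rightarrow> real"
  assumes "finite A" and "A \<noteq> {}"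
  shows "\<exists>a\<in>A. sum f A \<le> real (card A) * f a"
proof (rule ccontr)
  assume "\<not> ?thesis"
  moreover have "0 < real (card A)"
    using assms by (simp add: card_gt_0_iff)
  ultimately have "\<And>a. a \<in> A \<Longrightarrow> f a < sum f A / real (card A)"
    by (auto simp: not_le pos_less_divide_eq mult.commute)
  then have "sum f A < real (card A) * (sum f A / real (card A))"
    using assms by (intro sum_bounded_above_strict) auto
  with assms show False by simp
qed

lemma hadamard_sum_squares:
  fixes y :: "nat \<Rightarrow> real"
  assumes "hadamard M H"
  shows "(\<Sum>a<M. (\<Sum>k<M. H a k * y k)\<^sup>2) = real M * (\<Sum>k<M. (y k)\<^sup>2)"
proof -
  have orth: "\<And>k l. k < M \<Longrightarrow> l < M \<Longrightarrow>
      (\<Sum>a<M. H a k * H a l) = (if k = l then real M else 0)"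
    using assms unfolding hadamard_def by blast
  have "(\<Sum>a<M. (\<Sum>k<M. H a k * y k)\<^sup>2)
      = (\<Sum>a<M. \<Sum>k<M. \<Sum>l<M. (H a k * y k) * (H a l * y l))"
    by (simp add: power2_eq_square sum_product)
  also have "\<dots> = (\<Sum>k<M. \<Sum>l<M. \<Sum>a<M. (H a k * y k) * (H a l * y l))"
    by (subst sum.swap) (rule sum.cong[OF refl], rule sum.swap)
  also have "\<dots> = (\<Sum>k<M. \<Sum>l<M. y k * y l * (\<Sum>a<M. H a k * H a l))"
    by (simp add: sum_distrib_left mult_ac)
  also have "\<dots> = (\<Sum>k<M. \<Sum>l<M. if k = l then real M * (y k)\<^sup>2 else 0)"
    by (intro sum.cong refl) (simp add: orth power2_eq_square)
  also have "\<dots> = real M * (\<Sum>k<M. (y k)\<^sup>2)"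
    by (simp add: sum_distrib_left)
  finally show ?thesis .
qed

lemma hadamard_exists_large_entry:
  fixes y :: "nat \<Rightarrow> real"
  assumes "hadamard M H" and "0 < M"
  shows "\<exists>a<M. sqrt (\<Sum>k<M. (y k)\<^sup>2) \<le> \<bar>\<Sum>k<M. H a k * y k\<bar>"
proof -
  obtain a where a: "a < M"
    and "(\<Sum>a<M. (\<Sum>k<M. H a k * y k)\<^sup>2) \<le> real M * (\<Sum>k<M. H a k * y k)\<^sup>2"
    using exists_ge_average[of "{..<M}" "\<lambda>a. (\<Sum>k<M. H a k * y k)\<^sup>2"] assms(2) by auto
  then have "(\<Sum>k<M. (y k)\<^sup>2) \<le> (\<Sum>k<M. H a k * y k)\<^sup>2"
    using assms by (simp add: hadamard_sum_squares)
  then have "sqrt (\<Sum>k<M. (y k)\<^sup>2) \<le> sqrt ((\<Sum>k<M. H a k * y k)\<^sup>2)"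
    by (rule real_sqrt_le_mono)
  with a show ?thesis by auto
qed

definition unique_nbhd :: "(nat \<times> nat) set \<Rightarrow> nat \<Rightarrow> nat set \<Rightarrow> nat set" where
  "unique_nbhd E M S = {r\<in>{0..<M}. card (S \<inter> {c. (c, r) \<in> E}) = 1}"

text \<open>Counting the D |S| edges leaving S by their right endpoint: every neighbour of S
  receives at least one of them, and every non-unique neighbour at least two.\<close>
lemma left_regular_card_unique_nbhd:
  assumes lr: "left_regular n M D E" and Sn: "S \<subseteq> {0..<n}"
  shows "2 * real (card (nbhd E S)) - real (card (unique_nbhd E M S)) \<le> real D * real (card S)"
proof -
  define dg where "dg r = card (S \<inter> {c. (c, r) \<in> E})" for r
  have fS: "finite S" using Sn finite_subset by blast
  have Esub: "E \<subseteq> {0..<n} \<times> {0..<M}" and reg: "\<And>i. i < n \<Longrightarrow> card (nbhd E {i}) = D"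
    using lr unfolding left_regular_def by auto
  have deg: "real D = (\<Sum>r\<in>{0..<M}. of_bool ((c, r) \<in> E))" if "c \<in> S" for c
  proof -
    have "nbhd E {c} = {0..<M} \<inter> {r. (c, r) \<in> E}" using Esub unfolding nbhd_def by auto
    moreover have "c < n" using that Sn by auto
    ultimately show ?thesis using reg[of c] by simp
  qed
  have "real D * real (card S) = (\<Sum>c\<in>S. real D)"
    by simp
  also have "\<dots> = (\<Sum>c\<in>S. \<Sum>r\<in>{0..<M}. of_bool ((c, r) \<in> E))"
    using deg by (rule sum.cong[OF refl])
  also have "\<dots> = (\<Sum>r\<in>{0..<M}. real (dg r))"
    using fS by (subst sum.swap) (simp add: dg_def)
  finally have edges: "real D * real (card S) = (\<Sum>r\<in>{0..<M}. real (dg r))" .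
  have "nbhd E S = {0..<M} \<inter> {r. dg r \<noteq> 0}"
    using Esub fS unfolding nbhd_def dg_def by auto
  then have nb: "real (card (nbhd E S)) = (\<Sum>r\<in>{0..<M}. of_bool (dg r \<noteq> 0))"
    by simp
  have "unique_nbhd E M S = {0..<M} \<inter> {r. dg r = 1}"
    unfolding unique_nbhd_def dg_def by blast
  then have un: "real (card (unique_nbhd E M S)) = (\<Sum>r\<in>{0..<M}. of_bool (dg r = 1))"
    by simp
  have "(\<Sum>r\<in>{0..<M}. 2 * of_bool (dg r \<noteq> 0) - of_bool (dg r = 1)) \<le> (\<Sum>r\<in>{0..<M}. real (dg r))"
  proof (intro sum_mono)
    show "2 * of_bool (dg r \<noteq> 0) - of_bool (dg r = 1) \<le> real (dg r)" for r
      by (cases "dg r = 0"; cases "dg r = 1") auto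
  qed
  then show ?thesis
    unfolding edges nb un by (simp add: sum_subtractf sum_distrib_left)
qed

lemma bip_expander_card_unique_nbhd:
  assumes "bip_expander n M D K ((1 - eps) * real D) E"
    and "S \<subseteq> {0..<n}" and "real (card S) \<le> K"
  shows "(1 - 2 * eps) * real D * real (card S) \<le> real (card (unique_nbhd E M S))"
proof -
  have "left_regular n M D E"
    and "(1 - eps) * real D * real (card S) \<le> real (card (nbhd E S))"
    using assms unfolding bip_expander_def by auto
  with left_regular_card_unique_nbhd[OF _ assms(2)] show ?thesis
    by (fastforce simp: algebra_simps)
qed

lemma valid_decomposition_zero_off_edges:
  assumes "valid_decomposition n M D E Bs"
    and "i < D" and "r < M" and "c < n" and "(c, r) \<notin> E"
  shows "Bs i r c = 0"
proof -
  have "\<forall>i\<in>{..<D}. Bs i r c = 0 \<or> Bs i r c = 1"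
    and "(\<Sum>i<D. Bs i r c) = 0"
    using assms unfolding valid_decomposition_def induced_matrix_def by auto
  then have "\<forall>i\<in>{..<D}. Bs i r c = 0"
    by (subst sum_nonneg_eq_0_iff[symmetric]) force+
  with assms(2) show ?thesis by simp
qed

text \<open>Only the unique neighbour c0 of r in the support contributes to (B_i z)_r, and since
  the B_i are 0/1 and sum to the incidence matrix, B_i r c0 = 1 for exactly one i.\<close>
lemma valid_decomposition_unique_nbhd_sum_squares:
  assumes dec: "valid_decomposition n M D E Bs"
    and z: "\<forall>c<n. z c \<in> {-1, 0, 1}"
    and r: "r \<in> unique_nbhd E M {c\<in>{0..<n}. z c \<noteq> 0}"
  shows "(\<Sum>i<D. (\<Sum>c<n. Bs i r c * z c)\<^sup>2) = 1"
proof -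
  define S where "S = {c\<in>{0..<n}. z c \<noteq> 0}"
  have rM: "r < M" and "card (S \<inter> {c. (c, r) \<in> E}) = 1"
    using r unfolding unique_nbhd_def S_def by auto
  then obtain c0 where c0: "S \<inter> {c. (c, r) \<in> E} = {c0}"
    by (auto simp: card_Suc_eq)
  then have c0n: "c0 < n" and c0E: "(c0, r) \<in> E" and zc0: "(z c0)\<^sup>2 = 1"
    using z unfolding S_def by auto
  have entry: "(\<Sum>c<n. Bs i r c * z c) = Bs i r c0 * z c0" if i: "i < D" for i
  proof -
    have "\<forall>c\<in>{..<n} - {c0}. Bs i r c * z c = 0"
    proof
      fix c assume c: "c \<in> {..<n} - {c0}"
      show "Bs i r c * z c = 0"
      proof (cases "z c = 0")
        case False
        with c c0 have "(c, r) \<notin> E" unfolding S_def by auto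
        with c show ?thesis
          using valid_decomposition_zero_off_edges[OF dec i rM] by simp
      qed simp
    qed
    then have "(\<Sum>c\<in>{..<n} - {c0}. Bs i r c * z c) = 0"
      by (rule sum.neutral)
    then show ?thesis
      using c0n by (subst sum.remove[of _ c0]) auto
  qed
  have "(\<Sum>i<D. (\<Sum>c<n. Bs i r c * z c)\<^sup>2) = (\<Sum>i<D. Bs i r c0)"
  proof (intro sum.cong refl)
    fix i assume "i \<in> {..<D}"
    then have "Bs i r c0 = 0 \<or> Bs i r c0 = 1" and "(\<Sum>c<n. Bs i r c * z c) = Bs i r c0 * z c0"
      using entry dec rM c0n unfolding valid_decomposition_def by auto
    then show "(\<Sum>c<n. Bs i r c * z c)\<^sup>2 = Bs i r c0"
      using zc0 by (auto simp: power_mult_distrib)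
  qed
  also have "\<dots> = 1"
    using dec rM c0n c0E unfolding valid_decomposition_def induced_matrix_def by simp
  finally show ?thesis .
qed

lemma mat_vec_pool_matrix:
  assumes "a < M"
  shows "mat_vec n (pool_matrix M H Bs) z (i * M + a) = (\<Sum>k<M. H a k * (\<Sum>c<n. Bs i k c * z c))"
proof -
  have "(i * M + a) mod M = a" and "(i * M + a) div M = i"
    using assms by auto
  then show ?thesis
    unfolding mat_vec_def pool_matrix_def
    by (simp add: sum_distrib_left sum_distrib_right mult.assoc sum.swap[of _ "{..<n}"])
qed

lemma abs_le_linf_norm:
  assumes "p < m"
  shows "\<bar>v p\<bar> \<le> linf_norm m v"
  using assms unfolding linf_norm_def by (auto intro!: Max_ge)

lemma pool_blocks_sum_squares_ge:
  assumes dec: "valid_decomposition n M D E Bs" and z: "\<forall>c<n. z c \<in> {-1, 0, 1}"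
  shows "real (card (unique_nbhd E M {c\<in>{0..<n}. z c \<noteq> 0}))
           \<le> (\<Sum>i<D. \<Sum>r<M. (\<Sum>c<n. Bs i r c * z c)\<^sup>2)"
proof -
  let ?U = "unique_nbhd E M {c\<in>{0..<n}. z c \<noteq> 0}"
  let ?y = "\<lambda>i r. \<Sum>c<n. Bs i r c * z c"
  have "real (card ?U) = (\<Sum>r\<in>?U. \<Sum>i<D. (?y i r)\<^sup>2)"
    using valid_decomposition_unique_nbhd_sum_squares[OF dec z] by simp
  also have "\<dots> \<le> (\<Sum>r<M. \<Sum>i<D. (?y i r)\<^sup>2)"
    by (intro sum_mono2) (auto simp: unique_nbhd_def intro: sum_nonneg)
  also have "\<dots> = (\<Sum>i<D. \<Sum>r<M. (?y i r)\<^sup>2)"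
    by (rule sum.swap)
  finally show ?thesis .
qed

lemma pool_matrix_linf_norm_ge:
  assumes exp: "bip_expander n M D K ((1 - eps) * real D) E"
    and had: "hadamard M H" and dec: "valid_decomposition n M D E Bs"
    and "0 < n" and "0 < D"
    and z: "\<forall>c<n. z c \<in> {-1, 0, 1}" and zK: "real (l0_norm n z) \<le> K"
  shows "sqrt ((1 - 2 * eps) * real (l0_norm n z))
           \<le> linf_norm (M * D) (mat_vec n (pool_matrix M H Bs) z)"
proof -
  define S where "S = {c\<in>{0..<n}. z c \<noteq> 0}"
  let ?y = "\<lambda>i r. \<Sum>c<n. Bs i r c * z c"
  have "left_regular n M D E"
    using exp unfolding bip_expander_def by simp
  then have "E \<subseteq> {0..<n} \<times> {0..<M}" and "nbhd E {0} \<noteq> {}"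
    using assms(4,5) unfolding left_regular_def by auto
  then have "0 < M"
    unfolding nbhd_def by auto
  have "S \<subseteq> {0..<n}" and "real (card S) \<le> K"
    using zK unfolding S_def l0_norm_def by auto
  obtain i where i: "i < D"
    and average: "(\<Sum>i<D. \<Sum>r<M. (?y i r)\<^sup>2) \<le> real D * (\<Sum>r<M. (?y i r)\<^sup>2)"
    using exists_ge_average[of "{..<D}" "\<lambda>i. \<Sum>r<M. (?y i r)\<^sup>2"] assms(5) by auto
  have "real D * ((1 - 2 * eps) * real (card S)) = (1 - 2 * eps) * real D * real (card S)"
    by simp
  also have "\<dots> \<le> real (card (unique_nbhd E M S))"
    using \<open>S \<subseteq> {0..<n}\<close> \<open>real (card S) \<le> K\<close> by (rule bip_expander_card_unique_nbhd[OF exp])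
  also have "\<dots> \<le> (\<Sum>i<D. \<Sum>r<M. (?y i r)\<^sup>2)"
    unfolding S_def by (rule pool_blocks_sum_squares_ge[OF dec z])
  also note average
  finally have "real D * ((1 - 2 * eps) * real (card S)) \<le> real D * (\<Sum>r<M. (?y i r)\<^sup>2)" .
  then have block: "(1 - 2 * eps) * real (card S) \<le> (\<Sum>r<M. (?y i r)\<^sup>2)"
    by (rule mult_left_le_imp_le) (use assms(5) in simp)
  obtain a where a: "a < M" and row: "sqrt (\<Sum>r<M. (?y i r)\<^sup>2) \<le> \<bar>\<Sum>k<M. H a k * ?y i k\<bar>"
    using hadamard_exists_large_entry[OF had \<open>0 < M\<close>, of "?y i"] by blast
  have idx: "i * M + a < M * D"
  proof -
    have "i * M + a < (i + 1) * M" using a by simp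
    also have "\<dots> \<le> D * M" using i by (intro mult_right_mono) auto
    finally show ?thesis by (simp add: mult.commute)
  qed
  have "l0_norm n z = card S"
    unfolding S_def l0_norm_def ..
  then have "sqrt ((1 - 2 * eps) * real (l0_norm n z)) \<le> sqrt (\<Sum>r<M. (?y i r)\<^sup>2)"
    using block by simp
  also note row
  also have "\<bar>\<Sum>k<M. H a k * ?y i k\<bar> = \<bar>mat_vec n (pool_matrix M H Bs) z (i * M + a)\<bar>"
    by (simp only: mat_vec_pool_matrix[OF a])
  also have "\<dots> \<le> linf_norm (M * D) (mat_vec n (pool_matrix M H Bs) z)"
    using idx by (rule abs_le_linf_norm)
  finally show ?thesis .
qed

lemma two_powr_sqrt_third_cube: "(2 powr sqrt (x / 3)) ^ 3 = (2::real) powr sqrt (3 * x)"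
proof -
  have "sqrt (3 * x) = sqrt (3\<^sup>2 * (x / 3))"
    by (simp add: power2_eq_square)
  also have "\<dots> = 3 * sqrt (x / 3)"
    by (simp only: real_sqrt_mult real_sqrt_abs)
  finally have "sqrt (3 * x) = sqrt (x / 3) + sqrt (x / 3) + sqrt (x / 3)"
    by simp
  then show ?thesis
    by (simp only: power3_eq_cube powr_add)
qed

lemma pooling_rows_le:
  fixes M D K L x :: real
  assumes "0 \<le> M" and "0 \<le> D" and "D \<le> L * 2 powr sqrt (x / 3)"
    and "M \<le> (L * 2 powr sqrt (x / 3))\<^sup>2 * K * 2 powr sqrt (3 * x)"
  shows "M * D \<le> K * L ^ 3 * 4 powr sqrt (3 * x)"
proof -
  have "M * D \<le> (L * 2 powr sqrt (x / 3))\<^sup>2 * K * 2 powr sqrt (3 * x) * (L * 2 powr sqrt (x / 3))"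
    using assms by (intro mult_mono) auto
  also have "\<dots> = K * L ^ 3 * ((2 powr sqrt (x / 3)) ^ 3 * 2 powr sqrt (3 * x))"
    by (simp add: power2_eq_square power3_eq_cube mult_ac)
  also have "(2 powr sqrt (x / 3)) ^ 3 * 2 powr sqrt (3 * x) = 2 powr (sqrt (3 * x) + sqrt (3 * x))"
    by (simp only: two_powr_sqrt_third_cube powr_add)
  also have "\<dots> = (2 powr 2) powr sqrt (3 * x)"
    by (simp only: powr_powr mult_2)
  also have "\<dots> = 4 powr sqrt (3 * x)"
    by simp
  finally show ?thesis
    by simp
qed

theorem theorem3:
  fixes dl ka la eps :: real and n M D :: nat
    and E :: "(nat \<times> nat) set" and H :: "nat \<Rightarrow> nat \<Rightarrow> real"
    and Bs :: "nat \<Rightarrow> nat \<Rightarrow> nat \<Rightarrow> real"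
  defines "L \<equiv> la * (log 2 (real n))\<^sup>2 / eps"
  defines "D0 \<equiv> L * 2 powr sqrt (la * log 2 (real n) * log 2 L / 3)"
  defines "M0 \<equiv> D0\<^sup>2 * real n powr la * 2 powr sqrt (3 * la * log 2 (real n) * log 2 L)"
  assumes "0 < 2 * dl" and "2 * dl \<le> ka" and "ka < la" and "la \<le> 1"
    and "0 < eps" and "eps < 1 / 2"
    and "0 < n"
    and "0 < D"
    and "bip_expander n M D (real n powr la) ((1 - eps) * real D) E"
    and "real D \<le> D0" and "real M \<le> M0"
    and "hadamard M H"
    and "valid_decomposition n M D E Bs"
  shows "(\<forall>z :: nat \<Rightarrow> real. (\<forall>c<n. z c \<in> {-1, 0, 1}) \<longrightarrow>
            real n powr ka \<le> real (l0_norm n z) \<longrightarrow> real (l0_norm n z) \<le> real n powr la \<longrightarrow>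
            linf_norm (M * D) (mat_vec n (pool_matrix M H Bs) z)
              \<ge> sqrt (1 - 2 * eps) * real n powr dl)
         \<and> real (M * D) \<le> real n powr la * L ^ 3
              * 4 powr sqrt (3 * la * log 2 (real n) * log 2 L)"
proof (intro conjI allI impI)
  fix z :: "nat \<Rightarrow> real"
  assume z: "\<forall>c<n. z c \<in> {-1, 0, 1}" and lo: "real n powr ka \<le> real (l0_norm n z)"
    and hi: "real (l0_norm n z) \<le> real n powr la"
  have "(real n powr dl)\<^sup>2 = real n powr (2 * dl)"
    by (simp add: power2_eq_square flip: powr_add)
  also have "\<dots> \<le> real n powr ka"
    using assms(5,10) by (intro powr_mono) auto
  finally have "(real n powr dl)\<^sup>2 \<le> real n powr ka" .
  then have "sqrt (1 - 2 * eps) * real n powr dl \<le> sqrt ((1 - 2 * eps) * real (l0_norm n z))"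
    using lo assms(9) by (simp add: real_sqrt_mult real_le_rsqrt mult_left_mono)
  also have "\<dots> \<le> linf_norm (M * D) (mat_vec n (pool_matrix M H Bs) z)"
    using pool_matrix_linf_norm_ge[OF assms(12,15,16,10,11) z hi] .
  finally show "linf_norm (M * D) (mat_vec n (pool_matrix M H Bs) z)
      \<ge> sqrt (1 - 2 * eps) * real n powr dl" .
next
  show "real (M * D) \<le> real n powr la * L ^ 3 * 4 powr sqrt (3 * la * log 2 (real n) * log 2 L)"
    using pooling_rows_le[of "real M" "real D" L "la * log 2 (real n) * log 2 L" "real n powr la"]
      assms(13,14) unfolding D0_def M0_def by (simp add: mult.assoc)
qed

end
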